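(* Let $m\ge1$ and for $p_1,\dots,p_m\ge0$ let $K_{p_1,\dots,p_m}$ be the complete $m$-partite graph with parts of sizes $p_1,\dots,p_m$ (two vertices adjacent iff they lie in different parts). Then $$\sum_{p_1,\dots,p_m\ge0}\mathrm{sa}(K_{p_1,\dots,p_m};t)\,\frac{x_1^{p_1}}{p_1!}\cdots\frac{x_m^{p_m}}{p_m!} = e^{t(x_1+\cdots+x_m)}\,\frac{(1-m)+\cosh x_1+\cdots+\cosh x_m}{\cosh(x_1+\cdots+x_m)}.$$
   Context: All graphs are finite, simple and undirected. For a graph $G=(V,E)$ and $V'\subseteq V$, $G|_{V'}$ denotes the induced subgraph on $V'$. The signed a-number $\mathrm{sa}(G)$ is defined recursively: $\mathrm{sa}(G)=1$ if $G$ is the empty graph (no vertices); $\mathrm{sa}(G)=0$ if $G$ has a connected component with an odd number of vertices; otherwise $\mathrm{sa}(G)=-\sum_{V'\subsetneq V}\mathrm{sa}(G|_{V'})$. The signed a-polynomial of $G$ is $\mathrm{sa}(G;t)=\sum_{V'\subseteq V}\mathrm{sa}(G|_{V'})\,t^{|V\setminus V'|}$. *)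

theory Defs
  imports "HOL-Analysis.Analysis"
begin

text \<open>A (simple, undirected) graph is given by a vertex set V and a symmetric,
irreflexive adjacency relation E; the induced subgraph on W is (W, E).\<close>

definition adj_in :: "('a \<Rightarrow> 'a \<Rightarrow> bool) \<Rightarrow> 'a set \<Rightarrow> 'a \<Rightarrow> 'a \<Rightarrow> bool" where
  "adj_in E V a b \<longleftrightarrow> a \<in> V \<and> b \<in> V \<and> E a b"

definition component :: "('a \<Rightarrow> 'a \<Rightarrow> bool) \<Rightarrow> 'a set \<Rightarrow> 'a \<Rightarrow> 'a set" where
  "component E V v = {u. (adj_in E V)\<^sup>*\<^sup>* v u}"

definition has_odd_component :: "('a \<Rightarrow> 'a \<Rightarrow> bool) \<Rightarrow> 'a set \<Rightarrow> bool" where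
  "has_odd_component E V \<longleftrightarrow> (\<exists>v\<in>V. odd (card (component E V v)))"

function sa :: "('a \<Rightarrow> 'a \<Rightarrow> bool) \<Rightarrow> 'a set \<Rightarrow> int" where
  "sa E V = (if \<not> finite V then 0
             else if V = {} then 1
             else if has_odd_component E V then 0
             else - (\<Sum>W\<in>{W. W \<subset> V}. sa E W))"
  by auto
termination
  by (relation "Wellfounded.measure (\<lambda>(E, V). card V)") (auto intro: psubset_card_mono)

definition sa_poly :: "('a \<Rightarrow> 'a \<Rightarrow> bool) \<Rightarrow> 'a set \<Rightarrow> real \<Rightarrow> real" where
  "sa_poly E V t = (\<Sum>W\<in>Pow V. real_of_int (sa E W) * t ^ card (V - W))"

text \<open>Complete multipartite graph K_{p_0,...,p_{m-1}}: vertex (i,j) lies in part i.\<close>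
definition multipartite_vertices :: "nat \<Rightarrow> (nat \<Rightarrow> nat) \<Rightarrow> (nat \<times> nat) set" where
  "multipartite_vertices m p = {(i, j). i < m \<and> j < p i}"

definition multipartite_adj :: "nat \<times> nat \<Rightarrow> nat \<times> nat \<Rightarrow> bool" where
  "multipartite_adj u v \<longleftrightarrow> fst u \<noteq> fst v"

end

theory Submission
  imports Defs
begin

text \<open>Let \<open>A(x) = \<Sum>q. sa(K_q) x^q / q!\<close>. Every induced subgraph of \<open>K_p\<close> is a complete
  multipartite graph \<open>K_q\<close> with \<open>q \<le> p\<close>, occurring \<open>\<Prod>i. (p_i choose q_i)\<close> times, so multiplying
  \<open>A(x)\<close> by a series \<open>\<Sum>r. \<phi>(|r|) x^r / r!\<close> gives the series with coefficients
  \<open>\<Sum>W \<subseteq> V(K_p). sa(W) \<phi>(|V(K_p) - W|)\<close>. For \<open>\<phi>(n) = t^n\<close> these are the signed a-polynomials,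
  so the left-hand side is \<open>A(x) exp(t (x_1 + ... + x_m))\<close>. For \<open>\<phi>(n) = [n even]\<close> the recursion
  evaluates them: a complete multipartite graph has an odd component exactly when its order is
  odd or its nonempty vertex set lies inside one part, and otherwise the sum of \<open>sa\<close> over all
  its induced subgraphs vanishes. Hence \<open>A(x) cosh(x_1 + ... + x_m) = 1 - m + \<Sum>i. cosh x_i\<close>.
  Convergence near 0 comes from the crude bound \<open>|sa(G)| \<le> |G|! 2^|G|\<close>.\<close>

definition multi_indices :: "nat \<Rightarrow> (nat \<Rightarrow> nat) set" where
  "multi_indices m = {p. \<forall>i\<ge>m. p i = 0}"

lemma multi_indices_index_lt: "p \<in> multi_indices m \<Longrightarrow> p i \<noteq> 0 \<Longrightarrow> i < m"
  by (rule ccontr) (simp add: multi_indices_def)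

lemma has_sum_product:
  fixes f g :: "_ \<Rightarrow> real"
  assumes f: "(f has_sum S) A" and g: "(g has_sum T) B"
  shows "((\<lambda>(a, b). f a * g b) has_sum (S * T)) (A \<times> B)"
proof -
  have fa: "(\<lambda>a. norm (f a)) summable_on A" and ga: "(\<lambda>b. norm (g b)) summable_on B"
    using f g summable_on_iff_abs_summable_on_real has_sum_imp_summable by blast+
  have "(\<lambda>z. norm ((\<lambda>(a, b). f a * g b) z)) summable_on (Sigma A (\<lambda>_. B))"
  proof (rule Infinite_Sum.abs_summable_on_Sigma_iff[THEN iffD2], intro conjI ballI)
    show "(\<lambda>b. norm ((\<lambda>(a, b). f a * g b) (a, b))) summable_on B" for a
      using summable_on_cmult_right[OF ga, of "norm (f a)"] by (simp add: abs_mult)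
    show "(\<lambda>a. norm (\<Sum>\<^sub>\<infinity>b\<in>B. norm ((\<lambda>(a, b). f a * g b) (a, b)))) summable_on A"
      using summable_on_cmult_left[OF fa, of "\<Sum>\<^sub>\<infinity>b\<in>B. norm (g b)"]
      by (simp add: abs_mult infsum_cmult_right' infsum_nonneg)
  qed
  then have summable: "(\<lambda>(a, b). f a * g b) summable_on (A \<times> B)"
    using abs_summable_summable by blast
  have "(\<Sum>\<^sub>\<infinity>(a, b)\<in>A \<times> B. f a * g b) = (\<Sum>\<^sub>\<infinity>a\<in>A. \<Sum>\<^sub>\<infinity>b\<in>B. f a * g b)"
    using infsum_Sigma'_banach[of "\<lambda>a b. f a * g b" A "\<lambda>_. B"] summable by simp
  also have "\<dots> = S * T"
    using f g by (simp add: infsum_cmult_left' infsum_cmult_right' infsumI)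
  finally show ?thesis
    using summable has_sum_iff by blast
qed

lemma has_sum_prod_multi_indices:
  fixes f :: "nat \<Rightarrow> nat \<Rightarrow> real"
  assumes "\<And>i. i < m \<Longrightarrow> (f i has_sum S i) UNIV"
  shows "((\<lambda>p. \<Prod>i<m. f i (p i)) has_sum (\<Prod>i<m. S i)) (multi_indices m)"
  using assms
proof (induction m)
  case 0
  have "multi_indices 0 = {\<lambda>_. 0}"
    by (auto simp: multi_indices_def)
  then show ?case
    by (simp add: has_sum_finiteI)
next
  case (Suc m)
  have product: "((\<lambda>(p, n). (\<Prod>i<m. f i (p i)) * f m n) has_sum (\<Prod>i<m. S i) * S m) (multi_indices m \<times> UNIV)"
    using has_sum_product[OF Suc.IH Suc.prems[of m]] Suc.prems by simp
  show ?case
  proof (subst has_sum_reindex_bij_witness[where i = "\<lambda>(p, n). p(m := n)" and j = "\<lambda>p. (p(m := 0), p m)"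
        and T = "multi_indices m \<times> UNIV" and h = "\<lambda>(p, n). (\<Prod>i<m. f i (p i)) * f m n" and s' = "(\<Prod>i<m. S i) * S m"])
    show "(\<lambda>p. (p(m := 0), p m)) p \<in> multi_indices m \<times> UNIV"
      and "(\<lambda>(p, n). p(m := n)) ((\<lambda>p. (p(m := 0), p m)) p) = p" if "p \<in> multi_indices (Suc m)" for p
      using that by (auto simp: multi_indices_def)
    show "(\<lambda>p. (p(m := 0), p m)) ((\<lambda>(p, n). p(m := n)) b) = b"
      and "(\<lambda>(p, n). p(m := n)) b \<in> multi_indices (Suc m)" if "b \<in> multi_indices m \<times> UNIV" for b
      using that by (auto simp: multi_indices_def)
  qed (use product in \<open>simp_all add: mult.commute\<close>)
qed

lemma finite_atMost_multi_index:
  assumes "p \<in> multi_indices m"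
  shows "finite {..p}"
proof (rule finite_subset)
  let ?N = "\<Sum>i<m. p i"
  show "{..p} \<subseteq> {q. \<forall>i. (i \<in> {..<m} \<longrightarrow> q i \<in> {..?N}) \<and> (i \<notin> {..<m} \<longrightarrow> q i = 0)}"
  proof clarsimp
    fix q i assume q: "q \<le> p"
    have "i < m \<Longrightarrow> p i \<le> ?N"
      by (intro member_le_sum) auto
    moreover have "\<not> i < m \<Longrightarrow> p i = 0"
      using assms by (simp add: multi_indices_def)
    ultimately show "(i < m \<longrightarrow> q i \<le> ?N) \<and> (\<not> i < m \<longrightarrow> q i = 0)"
      using le_funD[OF q, of i] by auto
  qed
  show "finite {q. \<forall>i. (i \<in> {..<m} \<longrightarrow> q i \<in> {..?N}) \<and> (i \<notin> {..<m} \<longrightarrow> q i = 0)}"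
    by (rule finite_set_of_finite_funs) auto
qed

lemma has_sum_Cauchy_product_multi_indices:
  fixes f g :: "(nat \<Rightarrow> nat) \<Rightarrow> real"
  assumes f: "(f has_sum S) (multi_indices m)" and g: "(g has_sum T) (multi_indices m)"
  shows "((\<lambda>p. \<Sum>q\<le>p. f q * g (p - q)) has_sum (S * T)) (multi_indices m)"
proof -
  let ?I = "multi_indices m"
  have product: "((\<lambda>(q, r). f q * g r) has_sum S * T) (?I \<times> ?I)"
    by (rule has_sum_product[OF f g])
  have Sigma: "((\<lambda>(p, q). f q * g (p - q)) has_sum S * T) (Sigma ?I atMost)"
  proof (subst has_sum_reindex_bij_witness[where j = "\<lambda>(p, q). (q, p - q)"
        and i = "\<lambda>(q, r). (\<lambda>i. q i + r i, q)" and T = "?I \<times> ?I" and h = "\<lambda>(q, r). f q * g r" and s' = "S * T"])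
    show "(\<lambda>(q, r). (\<lambda>i. q i + r i, q)) ((\<lambda>(p, q). (q, p - q)) a) = a"
      and "(\<lambda>(p, q). (q, p - q)) a \<in> ?I \<times> ?I" if a_mem: "a \<in> Sigma ?I atMost" for a
    proof -
      obtain p q where a: "a = (p, q)" "p \<in> ?I" "q \<le> p"
        using a_mem by auto
      then have "(\<lambda>i. q i + (p - q) i) = p"
        by (simp add: fun_eq_iff le_funD)
      moreover have "q \<in> ?I" "p - q \<in> ?I"
        using a by (simp_all add: multi_indices_def) (metis le_funD le_zero_eq)
      ultimately show "(\<lambda>(q, r). (\<lambda>i. q i + r i, q)) ((\<lambda>(p, q). (q, p - q)) a) = a"
        and "(\<lambda>(p, q). (q, p - q)) a \<in> ?I \<times> ?I"
        using a by auto
    qed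
    show "(\<lambda>(p, q). (q, p - q)) ((\<lambda>(q, r). (\<lambda>i. q i + r i, q)) b) = b"
      and "(\<lambda>(q, r). (\<lambda>i. q i + r i, q)) b \<in> Sigma ?I atMost" if "b \<in> ?I \<times> ?I" for b
      using that by (auto simp: multi_indices_def le_fun_def fun_eq_iff)
  qed (auto intro: product)
  have finite_sums: "((\<lambda>q. f q * g (p - q)) has_sum (\<Sum>q\<le>p. f q * g (p - q))) {..p}" if "p \<in> ?I" for p
    using finite_atMost_multi_index[OF that] by (rule has_sum_finite)
  show ?thesis
    using has_sum_SigmaD[OF Sigma] finite_sums by (simp only: prod.case)
qed

lemma has_sum_sum:
  fixes f :: "'i \<Rightarrow> 'a \<Rightarrow> real"
  assumes "finite I" "\<And>i. i \<in> I \<Longrightarrow> (f i has_sum S i) A"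
  shows "((\<lambda>x. \<Sum>i\<in>I. f i x) has_sum (\<Sum>i\<in>I. S i)) A"
  using assms by (induction I rule: finite_induct) (simp_all add: has_sum_add)

definition exp_monomial :: "nat \<Rightarrow> (nat \<Rightarrow> real) \<Rightarrow> (nat \<Rightarrow> nat) \<Rightarrow> real" where
  "exp_monomial m x p = (\<Prod>i<m. x i ^ p i / fact (p i))"

definition total_degree :: "nat \<Rightarrow> (nat \<Rightarrow> nat) \<Rightarrow> nat" where
  "total_degree m p = (\<Sum>i<m. p i)"

lemma has_sum_exp: "((\<lambda>n. y ^ n / fact n) has_sum exp y) UNIV"
  for y :: real
proof -
  have "((\<lambda>n. y ^ n /\<^sub>R fact n) has_sum exp y) UNIV"
    using norm_summable_imp_has_sum[OF summable_norm_exp exp_converges] .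
  then show ?thesis
    by (simp add: divide_inverse mult.commute)
qed

lemma has_sum_cosh: "((\<lambda>n. if even n then y ^ n / fact n else 0) has_sum cosh y) UNIV"
  for y :: real
proof -
  have "summable (\<lambda>n. norm (if even n then y ^ n /\<^sub>R fact n else 0))"
    by (rule summable_comparison_test[OF _ summable_norm_exp[of y]]) auto
  then have "((\<lambda>n. if even n then y ^ n /\<^sub>R fact n else 0) has_sum cosh y) UNIV"
    using cosh_converges by (rule norm_summable_imp_has_sum)
  then show ?thesis
    by (simp add: divide_inverse mult.commute if_distrib cong: if_cong)
qed

lemma has_sum_exp_monomial:
  "(exp_monomial m x has_sum exp (\<Sum>i<m. x i)) (multi_indices m)"
  using has_sum_prod_multi_indices[of m "\<lambda>i n. x i ^ n / fact n", OF has_sum_exp]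
  unfolding exp_monomial_def[abs_def] exp_sum[OF finite_lessThan] .

lemma power_total_degree_mult_exp_monomial:
  "t ^ total_degree m p * exp_monomial m x p = exp_monomial m (\<lambda>i. t * x i) p"
  by (simp add: exp_monomial_def total_degree_def power_sum prod.distrib[symmetric] power_mult_distrib)

lemma has_sum_exp_scaled:
  "((\<lambda>p. t ^ total_degree m p * exp_monomial m x p) has_sum exp (t * (\<Sum>i<m. x i))) (multi_indices m)"
  using has_sum_exp_monomial[of m "\<lambda>i. t * x i"]
  by (simp add: power_total_degree_mult_exp_monomial sum_distrib_left)

lemma has_sum_cosh_even_degree:
  "((\<lambda>p. of_bool (even (total_degree m p)) * exp_monomial m x p) has_sum cosh (\<Sum>i<m. x i))
     (multi_indices m)"
proof -
  have "((\<lambda>p. (exp_monomial m x p + exp_monomial m (\<lambda>i. - x i) p) / 2) has_sum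
        ((exp (\<Sum>i<m. x i) + exp (\<Sum>i<m. - x i)) / 2)) (multi_indices m)"
    using has_sum_cmult_left[OF has_sum_add[OF has_sum_exp_monomial[of m x] has_sum_exp_monomial[of m "\<lambda>i. - x i"]], of "1/2"]
    by simp
  moreover have "(exp_monomial m x p + exp_monomial m (\<lambda>i. - x i) p) / 2
      = of_bool (even (total_degree m p)) * exp_monomial m x p" for p
  proof -
    have "exp_monomial m (\<lambda>i. - x i) p = (- 1) ^ total_degree m p * exp_monomial m x p"
      using power_total_degree_mult_exp_monomial[of "- 1" m p x] by simp
    then show ?thesis
      by simp
  qed
  ultimately show ?thesis
    by (simp add: cosh_def sum_negf)
qed

lemma has_sum_cosh_coordinate:
  assumes "i < m"
  shows "((\<lambda>p. of_bool ((\<forall>j. j \<noteq> i \<longrightarrow> p j = 0) \<and> even (p i)) * exp_monomial m x p)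
    has_sum cosh (x i)) (multi_indices m)"
proof -
  let ?S = "{p. \<forall>j. j \<noteq> i \<longrightarrow> p j = 0}"
  have coordinate: "exp_monomial m x (\<lambda>j. if j = i then n else 0) = x i ^ n / fact n" for n
  proof -
    have "exp_monomial m x (\<lambda>j. if j = i then n else 0) = (\<Prod>j<m. if j = i then x i ^ n / fact n else 1)"
      unfolding exp_monomial_def by (intro prod.cong) auto
    then show ?thesis
      using assms by simp
  qed
  have "((\<lambda>p. of_bool (even (p i)) * exp_monomial m x p) has_sum cosh (x i)) ?S"
  proof (subst has_sum_reindex_bij_witness[where j = "\<lambda>p. p i" and i = "\<lambda>n j. if j = i then n else 0"
        and T = UNIV and h = "\<lambda>n. if even n then x i ^ n / fact n else 0" and s' = "cosh (x i)"])
    show "(\<lambda>j. if j = i then p i else 0) = p" if "p \<in> ?S" for p :: "nat \<Rightarrow> nat"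
      using that by auto
    then show "(if even (p i) then x i ^ p i / fact (p i) else 0) = of_bool (even (p i)) * exp_monomial m x p"
      if "p \<in> ?S" for p
      using that coordinate[of "p i"] by fastforce
  qed (auto intro: has_sum_cosh)
  then show ?thesis
    by (rule has_sum_cong_neutral[THEN iffD1, rotated -1]) (use assms in \<open>auto simp: multi_indices_def\<close>)
qed

definition numerator_coeff :: "nat \<Rightarrow> (nat \<Rightarrow> nat) \<Rightarrow> real" where
  "numerator_coeff m p = (if p = (\<lambda>_. 0) then 1 - real m else 0) +
     (\<Sum>i<m. of_bool ((\<forall>j. j \<noteq> i \<longrightarrow> p j = 0) \<and> even (p i)))"

lemma has_sum_numerator_coeff:
  "((\<lambda>p. numerator_coeff m p * exp_monomial m x p) has_sum (1 - real m) + (\<Sum>i<m. cosh (x i)))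
     (multi_indices m)"
proof -
  have "((\<lambda>p. if p = (\<lambda>_. 0) then 1 - real m else 0) has_sum (1 - real m)) (multi_indices m)"
    by (rule has_sum_finite_neutralI[of "{\<lambda>_. 0}"]) (auto simp: multi_indices_def)
  moreover have "((\<lambda>p. \<Sum>i<m. of_bool ((\<forall>j. j \<noteq> i \<longrightarrow> p j = 0) \<and> even (p i)) * exp_monomial m x p)
      has_sum (\<Sum>i<m. cosh (x i))) (multi_indices m)"
    by (rule has_sum_sum) (auto intro: has_sum_cosh_coordinate)
  moreover have "numerator_coeff m p * exp_monomial m x p = (if p = (\<lambda>_. 0) then 1 - real m else 0)
      + (\<Sum>i<m. of_bool ((\<forall>j. j \<noteq> i \<longrightarrow> p j = 0) \<and> even (p i)) * exp_monomial m x p)" for p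
    by (simp add: numerator_coeff_def exp_monomial_def distrib_right sum_distrib_right del: sum_of_bool_eq)
  ultimately show ?thesis
    using has_sum_add by fastforce
qed

lemma exp_monomial_mult:
  assumes "q \<le> p"
  shows "exp_monomial m x q * exp_monomial m x (p - q) = real (\<Prod>i<m. p i choose q i) * exp_monomial m x p"
proof -
  have "x i ^ q i / fact (q i) * (x i ^ (p i - q i) / fact (p i - q i)) =
      real (p i choose q i) * (x i ^ p i / fact (p i))" for i
  proof -
    have le: "q i \<le> p i"
      using assms by (rule le_funD)
    then have "x i ^ p i = x i ^ q i * x i ^ (p i - q i)"
      by (simp add: power_add[symmetric])
    then show ?thesis
      using le by (simp add: binomial_fact field_simps)
  qed
  then show ?thesis
    unfolding exp_monomial_def prod.distrib[symmetric] of_nat_prod by simp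
qed

declare sa.simps [simp del]

definition in_one_part :: "(nat \<times> nat) set \<Rightarrow> bool" where
  "in_one_part W \<longleftrightarrow> (\<forall>u\<in>W. \<forall>v\<in>W. fst u = fst v)"

lemma in_one_part_subset: "in_one_part V \<Longrightarrow> W \<subseteq> V \<Longrightarrow> in_one_part W"
  unfolding in_one_part_def by blast

lemma component_multipartite_in_one_part:
  assumes "in_one_part W" "v \<in> W"
  shows "component multipartite_adj W v = {v}"
proof -
  have "u = v" if "(adj_in multipartite_adj W)\<^sup>*\<^sup>* v u" for u
    using that
  proof (cases rule: converse_rtranclpE)
    case (step w)
    then have "w \<in> W" "fst v \<noteq> fst w"
      by (auto simp: adj_in_def multipartite_adj_def)
    then show ?thesis
      using assms unfolding in_one_part_def by blast
  qed simp
  then show ?thesis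
    by (auto simp: component_def)
qed

lemma component_multipartite_not_in_one_part:
  assumes "\<not> in_one_part W" "v \<in> W"
  shows "component multipartite_adj W v = W"
proof
  show "component multipartite_adj W v \<subseteq> W"
  proof
    fix u assume "u \<in> component multipartite_adj W v"
    then have "(adj_in multipartite_adj W)\<^sup>*\<^sup>* v u"
      by (simp add: component_def)
    then show "u \<in> W"
      by (induction rule: rtranclp_induct) (use assms in \<open>auto simp: adj_in_def\<close>)
  qed
  show "W \<subseteq> component multipartite_adj W v"
  proof
    fix u assume u: "u \<in> W"
    show "u \<in> component multipartite_adj W v"
    proof (cases "fst u = fst v")
      case False
      then have "adj_in multipartite_adj W v u"
        using u assms by (auto simp: adj_in_def multipartite_adj_def)
      then show ?thesis
        by (simp add: component_def)
    next
      case True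
      obtain a b where "a \<in> W" "b \<in> W" "fst a \<noteq> fst b"
        using assms(1) unfolding in_one_part_def by blast
      then obtain w where "w \<in> W" "fst w \<noteq> fst v"
        by (cases "fst a = fst v") auto
      then have "adj_in multipartite_adj W v w" "adj_in multipartite_adj W w u"
        using u assms True by (auto simp: adj_in_def multipartite_adj_def)
      then have "(adj_in multipartite_adj W)\<^sup>*\<^sup>* v u"
        by (meson r_into_rtranclp converse_rtranclp_into_rtranclp)
      then show ?thesis
        by (simp add: component_def)
    qed
  qed
qed

lemma has_odd_component_multipartite_iff:
  "has_odd_component multipartite_adj W \<longleftrightarrow> W \<noteq> {} \<and> (odd (card W) \<or> in_one_part W)"
proof (cases "in_one_part W")
  case True
  then show ?thesis
    by (auto simp: has_odd_component_def component_multipartite_in_one_part)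
next
  case False
  then have "W \<noteq> {}"
    by (auto simp: in_one_part_def)
  with False show ?thesis
    by (auto simp: has_odd_component_def component_multipartite_not_in_one_part)
qed

lemma sa_multipartite_eq_0:
  assumes "finite W" "W \<noteq> {}" "odd (card W) \<or> in_one_part W"
  shows "sa multipartite_adj W = 0"
  using assms by (subst sa.simps) (simp add: has_odd_component_multipartite_iff)

lemma sum_Pow_sa_eq_0:
  assumes "finite V" "V \<noteq> {}" "\<not> has_odd_component E V"
  shows "(\<Sum>W\<in>Pow V. sa E W) = 0"
proof -
  have "finite {W. W \<subset> V}"
    by (rule finite_subset[of _ "Pow V"]) (use assms(1) in auto)
  moreover have "Pow V = insert V {W. W \<subset> V}"
    by auto
  ultimately have "(\<Sum>W\<in>Pow V. sa E W) = sa E V + (\<Sum>W\<in>{W. W \<subset> V}. sa E W)"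
    by simp
  also have "\<dots> = 0"
    using assms by (subst sa.simps) simp
  finally show ?thesis .
qed

lemma sum_Pow_sa_in_one_part:
  assumes "finite V" "in_one_part V"
  shows "(\<Sum>W\<in>Pow V. sa multipartite_adj W) = 1"
proof -
  have "sa multipartite_adj W = 0" if "W \<in> Pow V - {{}}" for W
    using that by (intro sa_multipartite_eq_0) (auto intro: rev_finite_subset[OF assms(1)] in_one_part_subset[OF assms(2)])
  then have "(\<Sum>W\<in>Pow V. sa multipartite_adj W) = sa multipartite_adj {}"
    using assms(1) by (subst sum.remove[of _ "{}"]) auto
  also have "\<dots> = 1"
    by (subst sa.simps) simp
  finally show ?thesis .
qed

text \<open>Odd subsets contribute nothing, so only the parity of \<open>V\<close> matters.\<close>

lemma sum_Pow_sa_even_complement: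
  assumes "finite V"
  shows "(\<Sum>W\<in>Pow V. real_of_int (sa multipartite_adj W) * of_bool (even (card (V - W))))
    = of_bool (in_one_part V \<and> even (card V))"
proof -
  have parity: "real_of_int (sa multipartite_adj W) * of_bool (even (card (V - W)))
      = of_bool (even (card V)) * real_of_int (sa multipartite_adj W)" if "W \<in> Pow V" for W
  proof (cases "even (card W)")
    case True
    have "card V = card (V - W) + card W"
      using that assms by (simp add: card_Diff_subset card_mono rev_finite_subset[OF assms])
    then show ?thesis
      using True by simp
  next
    case False
    then have "sa multipartite_adj W = 0"
      using that False by (intro sa_multipartite_eq_0) (auto intro: rev_finite_subset[OF assms])
    then show ?thesis
      by simp
  qed
  have "(\<Sum>W\<in>Pow V. real_of_int (sa multipartite_adj W) * of_bool (even (card (V - W))))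
      = of_bool (even (card V)) * real_of_int (\<Sum>W\<in>Pow V. sa multipartite_adj W)"
    by (simp only: sum.cong[OF refl parity] of_int_sum sum_distrib_left)
  also have "\<dots> = of_bool (in_one_part V \<and> even (card V))"
  proof (cases "in_one_part V \<or> odd (card V)")
    case False
    then have "V \<noteq> {}" "\<not> has_odd_component multipartite_adj V"
      by (auto simp: in_one_part_def has_odd_component_multipartite_iff)
    then show ?thesis
      using False by (simp add: sum_Pow_sa_eq_0[OF assms])
  qed (auto simp: assms sum_Pow_sa_in_one_part simp del: of_int_sum)
  finally show ?thesis .
qed

lemma psubsets_image:
  assumes "inj_on h A"
  shows "{B. B \<subset> h ` A} = image h ` {C. C \<subset> A}"
proof (intro equalityI subsetI)
  fix B assume "B \<in> {B. B \<subset> h ` A}"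
  then have B: "B \<subseteq> h ` A" "\<not> h ` A \<subseteq> B"
    by auto
  then have "B = h ` (A \<inter> h -` B)"
    by blast
  moreover have "A \<inter> h -` B \<subset> A"
    using B(2) by blast
  ultimately show "B \<in> image h ` {C. C \<subset> A}"
    by blast
next
  fix B assume "B \<in> image h ` {C. C \<subset> A}"
  then obtain C where "C \<subset> A" "B = h ` C"
    by blast
  then show "B \<in> {B. B \<subset> h ` A}"
    using image_strict_mono[OF assms] by simp
qed

lemma sa_multipartite_iso:
  assumes "finite W" "bij_betw h W W'"
    and "\<forall>u\<in>W. \<forall>v\<in>W. multipartite_adj (h u) (h v) \<longleftrightarrow> multipartite_adj u v"
  shows "sa multipartite_adj W' = sa multipartite_adj W"
  using assms
proof (induction "card W" arbitrary: W W' rule: less_induct)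
  case less
  have W': "W' = h ` W" and inj: "inj_on h W"
    using less.prems(2) by (auto simp: bij_betw_def)
  have "in_one_part (h ` W) \<longleftrightarrow> in_one_part W"
    using less.prems(3) by (simp add: in_one_part_def multipartite_adj_def)
  then have odd: "has_odd_component multipartite_adj W' \<longleftrightarrow> has_odd_component multipartite_adj W"
    unfolding has_odd_component_multipartite_iff W' card_image[OF inj] by simp
  have "sa multipartite_adj (h ` C) = sa multipartite_adj C" if "C \<subset> W" for C
  proof (rule less.hyps)
    show "card C < card W" "finite C"
      using that less.prems(1) by (auto intro: psubset_card_mono rev_finite_subset)
    show "bij_betw h C (h ` C)"
      using inj_on_subset[OF inj] that by (auto intro: inj_on_imp_bij_betw)
  qed (use that less.prems(3) in blast)
  moreover have "inj_on (image h) {C. C \<subset> W}"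
    using inj_on_image_Pow[OF inj] by (rule inj_on_subset) auto
  ultimately have "(\<Sum>C\<in>{C. C \<subset> W'}. sa multipartite_adj C) = (\<Sum>C\<in>{C. C \<subset> W}. sa multipartite_adj C)"
    unfolding W' psubsets_image[OF inj] by (simp add: sum.reindex)
  then show ?case
    using less.prems(1) odd by (subst (1 2) sa.simps) (simp add: W')
qed

definition part_sizes :: "(nat \<times> nat) set \<Rightarrow> nat \<Rightarrow> nat" where
  "part_sizes W i = card {j. (i, j) \<in> W}"

lemma multipartite_vertices_eq_Sigma: "multipartite_vertices m p = Sigma {..<m} (\<lambda>i. {..<p i})"
  by (auto simp: multipartite_vertices_def)

lemma finite_multipartite_vertices [simp]: "finite (multipartite_vertices m p)"
  by (simp add: multipartite_vertices_eq_Sigma)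

lemma card_multipartite_vertices: "card (multipartite_vertices m p) = total_degree m p"
  by (simp add: multipartite_vertices_eq_Sigma total_degree_def)

lemma bij_betw_Sigma:
  assumes "\<And>i. i \<in> I \<Longrightarrow> bij_betw (h i) (A i) (B i)"
  shows "bij_betw (\<lambda>(i, j). (i, h i j)) (Sigma I A) (Sigma I B)"
  unfolding bij_betw_def
proof
  show "inj_on (\<lambda>(i, j). (i, h i j)) (Sigma I A)"
  proof (rule inj_onI)
    fix a b assume "a \<in> Sigma I A" "b \<in> Sigma I A" "(\<lambda>(i, j). (i, h i j)) a = (\<lambda>(i, j). (i, h i j)) b"
    then obtain i j j' where "a = (i, j)" "b = (i, j')" "i \<in> I" "j \<in> A i" "j' \<in> A i" "h i j = h i j'"
      by auto
    then show "a = b"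
      using inj_onD[OF bij_betw_imp_inj_on[OF assms]] by simp
  qed
  show "(\<lambda>(i, j). (i, h i j)) ` Sigma I A = Sigma I B"
  proof (intro equalityI subsetI)
    fix z assume "z \<in> Sigma I B"
    then obtain i k where z: "z = (i, k)" "i \<in> I" "k \<in> B i"
      by blast
    then obtain j where "j \<in> A i" "k = h i j"
      using bij_betw_imp_surj_on[OF assms[OF z(2)]] by blast
    then show "z \<in> (\<lambda>(i, j). (i, h i j)) ` Sigma I A"
      using z by (intro image_eqI[of _ _ "(i, j)"]) simp_all
  next
    fix z assume "z \<in> (\<lambda>(i, j). (i, h i j)) ` Sigma I A"
    then obtain i j where "z = (i, h i j)" "i \<in> I" "j \<in> A i"
      by auto
    then show "z \<in> Sigma I B"
      using bij_betw_apply[OF assms] by simp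
  qed
qed

lemma subset_multipartite_vertices_eq_Sigma:
  assumes "W \<subseteq> multipartite_vertices m p"
  shows "Sigma {..<m} (\<lambda>i. {j. (i, j) \<in> W}) = W"
  using assms by (auto simp: multipartite_vertices_def)

lemma part_of_subset_multipartite_vertices:
  assumes "W \<subseteq> multipartite_vertices m p"
  shows "{j. (i, j) \<in> W} \<subseteq> {..<p i}"
  using assms by (auto simp: multipartite_vertices_def)

lemma card_subset_multipartite_vertices:
  assumes "W \<subseteq> multipartite_vertices m p"
  shows "card W = total_degree m (part_sizes W)"
proof -
  have "finite {j. (i, j) \<in> W}" for i
    by (rule finite_subset[OF part_of_subset_multipartite_vertices[OF assms]]) simp
  then have "card (Sigma {..<m} (\<lambda>i. {j. (i, j) \<in> W})) = total_degree m (part_sizes W)"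
    by (simp add: total_degree_def part_sizes_def)
  then show ?thesis
    using subset_multipartite_vertices_eq_Sigma[OF assms] by simp
qed

lemma part_sizes_le:
  assumes "W \<subseteq> multipartite_vertices m p"
  shows "part_sizes W \<le> p"
  unfolding part_sizes_def le_fun_def
  using card_mono[OF finite_lessThan part_of_subset_multipartite_vertices[OF assms]] by simp

lemma sa_eq_sa_part_sizes:
  assumes W: "W \<subseteq> multipartite_vertices m p"
  shows "sa multipartite_adj W = sa multipartite_adj (multipartite_vertices m (part_sizes W))"
proof -
  have "finite {j. (i, j) \<in> W}" for i
    by (rule finite_subset[OF part_of_subset_multipartite_vertices[OF W]]) simp
  then have "\<forall>i. \<exists>g. bij_betw g {j. (i, j) \<in> W} {..<part_sizes W i}"
    unfolding part_sizes_def lessThan_atLeast0 by (simp add: ex_bij_betw_finite_nat)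
  then obtain g where "\<And>i. bij_betw (g i) {j. (i, j) \<in> W} {..<part_sizes W i}"
    by metis
  then have "bij_betw (\<lambda>(i, j). (i, g i j)) (Sigma {..<m} (\<lambda>i. {j. (i, j) \<in> W}))
      (multipartite_vertices m (part_sizes W))"
    unfolding multipartite_vertices_eq_Sigma by (rule bij_betw_Sigma)
  then have bij: "bij_betw (\<lambda>(i, j). (i, g i j)) W (multipartite_vertices m (part_sizes W))"
    unfolding subset_multipartite_vertices_eq_Sigma[OF W] .
  have "\<forall>u\<in>W. \<forall>v\<in>W. multipartite_adj ((\<lambda>(i, j). (i, g i j)) u) ((\<lambda>(i, j). (i, g i j)) v)
      \<longleftrightarrow> multipartite_adj u v"
    by (simp add: multipartite_adj_def split_beta)
  then show ?thesis
    using sa_multipartite_iso[OF rev_finite_subset[OF finite_multipartite_vertices W] bij] by simp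
qed

lemma bij_betw_part_sets_PiE:
  assumes "q \<le> p" "\<And>i. i \<ge> m \<Longrightarrow> q i = 0"
  shows "bij_betw (\<lambda>W. restrict (\<lambda>i. {j. (i, j) \<in> W}) {..<m})
    {W \<in> Pow (multipartite_vertices m p). part_sizes W = q}
    (Pi\<^sub>E {..<m} (\<lambda>i. {S. S \<subseteq> {..<p i} \<and> card S = q i}))"
    (is "bij_betw ?parts ?A ?B")
proof (rule bij_betw_byWitness[where f' = "Sigma {..<m}"])
  show "\<forall>W\<in>?A. Sigma {..<m} (?parts W) = W"
  proof
    fix W assume "W \<in> ?A"
    have "Sigma {..<m} (?parts W) = Sigma {..<m} (\<lambda>i. {j. (i, j) \<in> W})"
      by (rule Sigma_cong) simp_all
    then show "Sigma {..<m} (?parts W) = W"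
      using subset_multipartite_vertices_eq_Sigma[of W m p] \<open>W \<in> ?A\<close> by simp
  qed
  show "\<forall>F\<in>?B. ?parts (Sigma {..<m} F) = F"
    by (auto simp: PiE_def extensional_def restrict_def fun_eq_iff)
  show "?parts ` ?A \<subseteq> ?B"
  proof (rule image_subsetI)
    fix W assume "W \<in> ?A"
    then have "W \<subseteq> multipartite_vertices m p" "q = part_sizes W"
      by auto
    then show "?parts W \<in> ?B"
      by (auto simp: part_sizes_def multipartite_vertices_def)
  qed
  show "Sigma {..<m} ` ?B \<subseteq> ?A"
  proof (rule image_subsetI)
    fix F assume F: "F \<in> ?B"
    have "part_sizes (Sigma {..<m} F) i = q i" for i
      using F assms(2)[of i] by (cases "i < m") (auto simp: part_sizes_def)
    then show "Sigma {..<m} F \<in> ?A"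
      using F by (auto simp: multipartite_vertices_def)
  qed
qed

lemma card_subsets_with_part_sizes:
  assumes p: "p \<in> multi_indices m" and "q \<le> p"
  shows "card {W \<in> Pow (multipartite_vertices m p). part_sizes W = q} = (\<Prod>i<m. p i choose q i)"
proof -
  have q_zero: "q i = 0" if "i \<ge> m" for i
    using le_funD[OF assms(2), of i] p that by (simp add: multi_indices_def)
  have "card {W \<in> Pow (multipartite_vertices m p). part_sizes W = q}
      = card (Pi\<^sub>E {..<m} (\<lambda>i. {S. S \<subseteq> {..<p i} \<and> card S = q i}))"
    by (rule bij_betw_same_card[OF bij_betw_part_sets_PiE[OF assms(2) q_zero]])
  also have "\<dots> = (\<Prod>i<m. p i choose q i)"
    by (simp add: card_PiE n_subsets)
  finally show ?thesis .
qed

lemma sum_Pow_multipartite_vertices_by_part_sizes: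
  fixes h :: "(nat \<Rightarrow> nat) \<Rightarrow> real"
  assumes p: "p \<in> multi_indices m"
  shows "(\<Sum>W\<in>Pow (multipartite_vertices m p). h (part_sizes W))
    = (\<Sum>q\<le>p. real (\<Prod>i<m. p i choose q i) * h q)"
proof -
  have "(\<Sum>W\<in>Pow (multipartite_vertices m p). h (part_sizes W))
      = (\<Sum>q\<le>p. \<Sum>W\<in>{W \<in> Pow (multipartite_vertices m p). part_sizes W = q}. h (part_sizes W))"
    by (rule sum.group[symmetric]) (auto simp: finite_atMost_multi_index[OF p] part_sizes_le)
  also have "\<dots> = (\<Sum>q\<le>p. real (\<Prod>i<m. p i choose q i) * h q)"
  proof (rule sum.cong[OF refl])
    fix q assume "q \<in> {..p}"
    then have "card {W \<in> Pow (multipartite_vertices m p). part_sizes W = q} = (\<Prod>i<m. p i choose q i)"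
      using card_subsets_with_part_sizes[OF p] by simp
    moreover have "(\<Sum>W\<in>{W \<in> Pow (multipartite_vertices m p). part_sizes W = q}. h (part_sizes W))
        = (\<Sum>W\<in>{W \<in> Pow (multipartite_vertices m p). part_sizes W = q}. h q)"
      by (rule sum.cong) simp_all
    ultimately show "(\<Sum>W\<in>{W \<in> Pow (multipartite_vertices m p). part_sizes W = q}. h (part_sizes W))
        = real (\<Prod>i<m. p i choose q i) * h q"
      by simp
  qed
  finally show ?thesis .
qed

definition sa_multipartite :: "nat \<Rightarrow> (nat \<Rightarrow> nat) \<Rightarrow> real" where
  "sa_multipartite m q = real_of_int (sa multipartite_adj (multipartite_vertices m q))"

lemma sum_Pow_sa_multipartite_vertices:
  fixes \<phi> :: "nat \<Rightarrow> real"
  assumes p: "p \<in> multi_indices m"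
  shows "(\<Sum>W\<in>Pow (multipartite_vertices m p).
      real_of_int (sa multipartite_adj W) * \<phi> (card (multipartite_vertices m p - W)))
    = (\<Sum>q\<le>p. real (\<Prod>i<m. p i choose q i) * (sa_multipartite m q * \<phi> (total_degree m p - total_degree m q)))"
proof -
  have summand: "real_of_int (sa multipartite_adj W) * \<phi> (card (multipartite_vertices m p - W))
      = sa_multipartite m (part_sizes W) * \<phi> (total_degree m p - total_degree m (part_sizes W))"
    if "W \<in> Pow (multipartite_vertices m p)" for W
  proof -
    have W: "W \<subseteq> multipartite_vertices m p"
      using that by simp
    then have "sa multipartite_adj W = sa multipartite_adj (multipartite_vertices m (part_sizes W))"
      by (rule sa_eq_sa_part_sizes)
    moreover have "card (multipartite_vertices m p - W) = total_degree m p - total_degree m (part_sizes W)"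
      using W rev_finite_subset[OF finite_multipartite_vertices W]
      by (simp add: card_Diff_subset card_multipartite_vertices card_subset_multipartite_vertices)
    ultimately show ?thesis
      by (simp add: sa_multipartite_def)
  qed
  then show ?thesis
    using sum_Pow_multipartite_vertices_by_part_sizes[OF p,
        of "\<lambda>q. sa_multipartite m q * \<phi> (total_degree m p - total_degree m q)"]
    by (simp only: sum.cong[OF refl summand])
qed

lemma in_one_part_multipartite_vertices_iff:
  assumes p: "p \<in> multi_indices m" and k: "p k \<noteq> 0"
  shows "in_one_part (multipartite_vertices m p) \<longleftrightarrow> (\<forall>j. j \<noteq> k \<longrightarrow> p j = 0)"
proof
  have vertex: "(j, 0) \<in> multipartite_vertices m p" if "p j \<noteq> 0" for j
    using multi_indices_index_lt[OF p that] that by (simp add: multipartite_vertices_def)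
  assume one_part: "in_one_part (multipartite_vertices m p)"
  show "\<forall>j. j \<noteq> k \<longrightarrow> p j = 0"
  proof (intro allI impI, rule ccontr)
    fix j assume "j \<noteq> k" "p j \<noteq> 0"
    have "fst (j, 0::nat) = fst (k, 0::nat)"
      using one_part vertex[OF \<open>p j \<noteq> 0\<close>] vertex[OF k] unfolding in_one_part_def by blast
    with \<open>j \<noteq> k\<close> show False
      by simp
  qed
next
  assume "\<forall>j. j \<noteq> k \<longrightarrow> p j = 0"
  then have "fst u = k" if u: "u \<in> multipartite_vertices m p" for u
  proof -
    obtain i j where "u = (i, j)" "j < p i"
      using u by (auto simp: multipartite_vertices_def)
    with \<open>\<forall>j. j \<noteq> k \<longrightarrow> p j = 0\<close> show ?thesis
      by (cases "i = k") auto
  qed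
  then show "in_one_part (multipartite_vertices m p)"
    unfolding in_one_part_def by simp
qed

lemma numerator_coeff_eq:
  assumes p: "p \<in> multi_indices m"
  shows "numerator_coeff m p = of_bool (in_one_part (multipartite_vertices m p) \<and> even (total_degree m p))"
proof (cases "p = (\<lambda>_. 0)")
  case True
  then show ?thesis
    by (simp add: numerator_coeff_def in_one_part_def multipartite_vertices_def total_degree_def)
next
  case False
  then obtain k where k: "p k \<noteq> 0"
    by auto
  have "k < m"
    using multi_indices_index_lt[OF p k] .
  let ?single = "\<forall>j. j \<noteq> k \<longrightarrow> p j = 0"
  have summand: "of_bool ((\<forall>j. j \<noteq> i \<longrightarrow> p j = 0) \<and> even (p i))
      = (if i = k then of_bool (?single \<and> even (p k)) else 0 :: real)" for i
  proof (cases "i = k")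
    case False
    then have "\<not> (\<forall>j. j \<noteq> i \<longrightarrow> p j = 0)"
      using k by (metis (full_types))
    then show ?thesis
      using False by simp
  qed simp
  have "numerator_coeff m p = (\<Sum>i<m. if i = k then of_bool (?single \<and> even (p k)) else 0)"
    unfolding numerator_coeff_def using False by (simp only: sum.cong[OF refl summand]) simp
  then have "numerator_coeff m p = of_bool (?single \<and> even (p k))"
    using \<open>k < m\<close> by simp
  moreover have "total_degree m p = p k" if ?single
  proof -
    have "total_degree m p = (\<Sum>i<m. if i = k then p k else 0)"
      unfolding total_degree_def using that by (intro sum.cong) auto
    then show ?thesis
      using \<open>k < m\<close> by simp
  qed
  ultimately show ?thesis
    using in_one_part_multipartite_vertices_iff[OF p k] by auto
qed

lemma binomial_mult_fact_le: "k \<le> n \<Longrightarrow> (n choose k) * fact k \<le> (fact n :: nat)"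
  by (metis binomial_fact_lemma fact_ge_1 mult.commute mult.right_neutral mult_le_mono2)

lemma sum_psubsets_fact_le:
  assumes "finite W"
  shows "(\<Sum>C\<in>{C. C \<subset> W}. fact (card C) * 2 ^ card C) \<le> (fact (card W) * 2 ^ card W :: nat)"
proof -
  let ?n = "card W" and ?P = "{C. C \<subset> W}"
  have "finite ?P"
    by (rule finite_subset[of _ "Pow W"]) (use assms in auto)
  then have "(\<Sum>C\<in>?P. fact (card C) * 2 ^ card C :: nat)
      = (\<Sum>k\<in>{..<?n}. \<Sum>C\<in>{C \<in> ?P. card C = k}. fact (card C) * 2 ^ card C)"
    by (rule sum.group[symmetric]) (use assms psubset_card_mono in auto)
  also have "\<dots> = (\<Sum>k<?n. card {C \<in> ?P. card C = k} * (fact k * 2 ^ k))"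
    by (rule sum.cong[OF refl]) simp
  also have "\<dots> \<le> (\<Sum>k<?n. (?n choose k) * (fact k * 2 ^ k))"
  proof (rule sum_mono)
    fix k
    have "card {C \<in> ?P. card C = k} \<le> card {C. C \<subseteq> W \<and> card C = k}"
      by (rule card_mono) (use assms in \<open>auto intro: finite_subset[of _ "Pow W"]\<close>)
    then show "card {C \<in> ?P. card C = k} * (fact k * 2 ^ k) \<le> (?n choose k) * (fact k * 2 ^ k)"
      by (simp add: n_subsets[OF assms])
  qed
  also have "\<dots> \<le> (\<Sum>k<?n. fact ?n * 2 ^ k)"
    using binomial_mult_fact_le by (intro sum_mono) (simp add: mult.assoc[symmetric])
  also have "\<dots> \<le> fact ?n * 2 ^ ?n"
    using sum_power2[of ?n] by (simp add: sum_distrib_left[symmetric] lessThan_atLeast0)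
  finally show ?thesis .
qed

lemma abs_sa_le:
  assumes "finite W"
  shows "\<bar>sa E W\<bar> \<le> fact (card W) * 2 ^ card W"
  using assms
proof (induction "card W" arbitrary: W rule: less_induct)
  case less
  show ?case
  proof (cases "W = {} \<or> has_odd_component E W")
    case False
    then have "\<bar>sa E W\<bar> = \<bar>\<Sum>C\<in>{C. C \<subset> W}. sa E C\<bar>"
      using less.prems by (subst sa.simps) simp
    also have "\<dots> \<le> (\<Sum>C\<in>{C. C \<subset> W}. \<bar>sa E C\<bar>)"
      by (rule sum_abs)
    also have "\<dots> \<le> (\<Sum>C\<in>{C. C \<subset> W}. fact (card C) * 2 ^ card C)"
    proof (rule sum_mono)
      fix C assume "C \<in> {C. C \<subset> W}"
      then show "\<bar>sa E C\<bar> \<le> fact (card C) * 2 ^ card C"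
        using less.hyps psubset_card_mono[OF less.prems] rev_finite_subset[OF less.prems] by auto
    qed
    also have "\<dots> = int (\<Sum>C\<in>{C. C \<subset> W}. fact (card C) * 2 ^ card C)"
      by simp
    also have "\<dots> \<le> int (fact (card W) * 2 ^ card W)"
      using sum_psubsets_fact_le[OF less.prems] by (simp only: of_nat_le_iff)
    finally show ?thesis
      by simp
  qed (use less.prems in \<open>subst sa.simps, auto\<close>)
qed

lemma fact_add_le: "fact (a + b) \<le> 2 ^ (a + b) * (fact a * fact b :: nat)"
proof -
  have "fact (a + b) = (a + b choose a) * (fact a * fact b :: nat)"
    using binomial_fact_lemma[of a "a + b"] by (simp add: ac_simps)
  then show ?thesis
    using binomial_le_pow2 mult_le_mono1 by metis
qed

lemma fact_total_degree_le:
  "fact (total_degree m q) \<le> 2 ^ (m * total_degree m q) * (\<Prod>i<m. fact (q i) :: nat)"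
proof (induction m)
  case (Suc m)
  let ?s = "total_degree m q" and ?P = "\<Prod>i<m. fact (q i) :: nat"
  have "fact (?s + q m) \<le> (2::nat) ^ (?s + q m) * (fact ?s * fact (q m))"
    by (rule fact_add_le)
  also have "\<dots> \<le> 2 ^ (?s + q m) * ((2 ^ (m * ?s) * ?P) * fact (q m))"
    using Suc.IH by (intro mult_le_mono2 mult_le_mono1)
  also have "\<dots> = 2 ^ (?s + q m + m * ?s) * (?P * fact (q m))"
    by (simp add: power_add ac_simps)
  also have "\<dots> \<le> 2 ^ (Suc m * (?s + q m)) * (?P * fact (q m))"
    by (intro mult_le_mono1 power_increasing) (auto simp: algebra_simps)
  finally show ?case
    by (simp add: total_degree_def mult.commute)
qed (simp add: total_degree_def)

lemma abs_sa_multipartite_le: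
  "\<bar>sa_multipartite m q\<bar> \<le> 2 ^ ((m + 1) * total_degree m q) * (\<Prod>i<m. fact (q i))"
proof -
  have "real_of_int \<bar>sa multipartite_adj (multipartite_vertices m q)\<bar>
      \<le> real_of_int (fact (total_degree m q) * 2 ^ total_degree m q)"
    using abs_sa_le[OF finite_multipartite_vertices, of multipartite_adj m q]
    unfolding card_multipartite_vertices by (simp only: of_int_le_iff)
  then have "\<bar>sa_multipartite m q\<bar> \<le> real (fact (total_degree m q) * 2 ^ total_degree m q)"
    by (simp add: sa_multipartite_def)
  also have "\<dots> \<le> real (2 ^ (m * total_degree m q) * (\<Prod>i<m. fact (q i)) * 2 ^ total_degree m q)"
    using fact_total_degree_le[of m q] by (intro of_nat_mono mult_le_mono1)
  also have "\<dots> = 2 ^ ((m + 1) * total_degree m q) * (\<Prod>i<m. fact (q i))"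
    by (simp add: power_add algebra_simps)
  finally show ?thesis .
qed

lemma norm_sa_multipartite_exp_monomial_le:
  "norm (sa_multipartite m q * exp_monomial m x q) \<le> (\<Prod>i<m. (2 ^ (m + 1) * \<bar>x i\<bar>) ^ q i)"
proof -
  let ?F = "\<Prod>i<m. fact (q i) :: real" and ?Y = "\<Prod>i<m. \<bar>x i\<bar> ^ q i"
  have "?F > 0"
    by (rule prod_pos) simp
  have "\<bar>exp_monomial m x q\<bar> = ?Y / ?F"
    unfolding exp_monomial_def abs_prod prod_dividef[symmetric] by (simp add: power_abs)
  then have "norm (sa_multipartite m q * exp_monomial m x q) = \<bar>sa_multipartite m q\<bar> * (?Y / ?F)"
    by (simp add: abs_mult)
  also have "\<dots> \<le> (2 ^ ((m + 1) * total_degree m q) * ?F) * (?Y / ?F)"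
    using \<open>?F > 0\<close> by (intro mult_right_mono abs_sa_multipartite_le) (simp add: prod_nonneg)
  also have "\<dots> = 2 ^ ((m + 1) * total_degree m q) * ?Y"
    using \<open>?F > 0\<close> by simp
  also have "(2::real) ^ ((m + 1) * total_degree m q) = (\<Prod>i<m. (2 ^ (m + 1)) ^ q i)"
    unfolding power_mult total_degree_def by (rule power_sum)
  finally show ?thesis
    by (simp add: power_mult_distrib prod.distrib)
qed

lemma summable_sa_multipartite_exp_monomial:
  assumes x: "\<forall>i<m. \<bar>x i\<bar> < 1 / 2 ^ (m + 1)"
  shows "(\<lambda>q. sa_multipartite m q * exp_monomial m x q) summable_on multi_indices m"
proof -
  define z where "z i = 2 ^ (m + 1) * \<bar>x i\<bar>" for i
  have z: "0 \<le> z i" "i < m \<Longrightarrow> z i < 1" for i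
    using x by (simp_all add: z_def field_simps)
  then have "((\<lambda>n. z i ^ n) has_sum 1 / (1 - z i)) UNIV" if "i < m" for i
    using sums_nonneg_imp_has_sum[OF geometric_sums] that by simp
  then have "((\<lambda>q. \<Prod>i<m. z i ^ q i) has_sum (\<Prod>i<m. 1 / (1 - z i))) (multi_indices m)"
    by (rule has_sum_prod_multi_indices)
  moreover have norm_eq: "norm (\<Prod>i<m. z i ^ q i) = (\<Prod>i<m. z i ^ q i)" for q
    using z by (simp add: prod_nonneg)
  ultimately have "(\<lambda>q. norm (\<Prod>i<m. z i ^ q i)) summable_on multi_indices m"
    using has_sum_imp_summable by simp
  moreover have "norm (sa_multipartite m q * exp_monomial m x q) \<le> norm (\<Prod>i<m. z i ^ q i)" for q
    using norm_sa_multipartite_exp_monomial_le[of m q x] norm_eq by (simp add: z_def)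
  ultimately show ?thesis
    by (rule abs_summable_summable[OF Infinite_Sum.abs_summable_on_comparison_test])
qed

lemma total_degree_diff:
  "q \<le> p \<Longrightarrow> total_degree m (p - q) = total_degree m p - total_degree m q"
  unfolding total_degree_def by (simp add: sum_subtractf_nat le_funD)

lemma has_sum_sa_convolution:
  fixes \<phi> :: "nat \<Rightarrow> real"
  assumes "((\<lambda>q. sa_multipartite m q * exp_monomial m x q) has_sum A) (multi_indices m)"
    and "((\<lambda>r. \<phi> (total_degree m r) * exp_monomial m x r) has_sum S) (multi_indices m)"
  shows "((\<lambda>p. (\<Sum>W\<in>Pow (multipartite_vertices m p).
        real_of_int (sa multipartite_adj W) * \<phi> (card (multipartite_vertices m p - W)))
      * exp_monomial m x p) has_sum A * S) (multi_indices m)"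
proof -
  have "(\<Sum>q\<le>p. sa_multipartite m q * exp_monomial m x q * (\<phi> (total_degree m (p - q)) * exp_monomial m x (p - q)))
      = (\<Sum>W\<in>Pow (multipartite_vertices m p).
        real_of_int (sa multipartite_adj W) * \<phi> (card (multipartite_vertices m p - W))) * exp_monomial m x p"
    if "p \<in> multi_indices m" for p
    unfolding sum_Pow_sa_multipartite_vertices[OF that] sum_distrib_right
  proof (rule sum.cong[OF refl])
    fix q assume "q \<in> {..p}"
    then show "sa_multipartite m q * exp_monomial m x q * (\<phi> (total_degree m (p - q)) * exp_monomial m x (p - q))
      = real (\<Prod>i<m. p i choose q i) * (sa_multipartite m q * \<phi> (total_degree m p - total_degree m q))
        * exp_monomial m x p"
      using exp_monomial_mult[of q p m x] by (simp add: total_degree_diff)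
  qed
  then show ?thesis
    using has_sum_Cauchy_product_multi_indices[OF assms] by (simp cong: has_sum_cong)
qed

theorem mainTheorem9:
  fixes m :: nat and t :: real
  assumes "m \<ge> 1"
  shows "\<exists>\<epsilon>>0. \<forall>x :: nat \<Rightarrow> real. (\<forall>i<m. \<bar>x i\<bar> < \<epsilon>) \<longrightarrow>
     ((\<lambda>p. sa_poly multipartite_adj (multipartite_vertices m p) t
            * (\<Prod>i<m. x i ^ p i / fact (p i)))
      has_sum
      (exp (t * (\<Sum>i<m. x i)) * ((1 - real m) + (\<Sum>i<m. cosh (x i)))
        / cosh (\<Sum>i<m. x i)))
     {p :: nat \<Rightarrow> nat. \<forall>i\<ge>m. p i = 0}"
proof (intro exI[of _ "1 / 2 ^ (m + 1)"] conjI allI impI)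
  fix x :: "nat \<Rightarrow> real"
  assume "\<forall>i<m. \<bar>x i\<bar> < 1 / 2 ^ (m + 1)"
  then obtain A where A: "((\<lambda>q. sa_multipartite m q * exp_monomial m x q) has_sum A) (multi_indices m)"
    using summable_sa_multipartite_exp_monomial unfolding summable_on_def by blast
  have "((\<lambda>p. numerator_coeff m p * exp_monomial m x p) has_sum A * cosh (\<Sum>i<m. x i)) (multi_indices m)"
  proof (rule has_sum_cong[THEN iffD1, OF _ has_sum_sa_convolution[OF A has_sum_cosh_even_degree]])
    fix p assume "p \<in> multi_indices m"
    then show "(\<Sum>W\<in>Pow (multipartite_vertices m p). real_of_int (sa multipartite_adj W)
        * of_bool (even (card (multipartite_vertices m p - W)))) * exp_monomial m x p
      = numerator_coeff m p * exp_monomial m x p"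
      by (simp only: sum_Pow_sa_even_complement[OF finite_multipartite_vertices]
          numerator_coeff_eq card_multipartite_vertices)
  qed
  then have "A = ((1 - real m) + (\<Sum>i<m. cosh (x i))) / cosh (\<Sum>i<m. x i)"
    using has_sum_unique[OF _ has_sum_numerator_coeff] by (simp add: eq_divide_eq)
  moreover have "((\<lambda>p. sa_poly multipartite_adj (multipartite_vertices m p) t * exp_monomial m x p)
      has_sum A * exp (t * (\<Sum>i<m. x i))) (multi_indices m)"
    using has_sum_sa_convolution[OF A has_sum_exp_scaled] by (simp add: sa_poly_def)
  ultimately show "((\<lambda>p. sa_poly multipartite_adj (multipartite_vertices m p) t
      * (\<Prod>i<m. x i ^ p i / fact (p i))) has_sum
      exp (t * (\<Sum>i<m. x i)) * ((1 - real m) + (\<Sum>i<m. cosh (x i))) / cosh (\<Sum>i<m. x i))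
    {p. \<forall>i\<ge>m. p i = 0}"
    by (simp add: multi_indices_def exp_monomial_def mult.commute)
qed simp

end
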